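(* Fix $\nu\in(0,1]$, $k\in\mathbb{N}$, $\lambda_1,\dots,\lambda_k>0$, $\Lambda=\lambda_1+\dots+\lambda_k$. The solution $p_j^\nu(t)$, $j\in\mathbb{N}_0$, $t\ge0$, of the Cauchy problem consisting of the fractional system in the context with $p_0^\nu(0)=1$, $p_j^\nu(0)=0$ for $j\ge1$, is \[ p_j^\nu(t)=\sum_{r=0}^{j}\ \sum_{\substack{\alpha_1+\dots+\alpha_k=r\\ \alpha_1+2\alpha_2+\dots+k\alpha_k=j}}\binom{r}{\alpha_1,\dots,\alpha_k}\lambda_1^{\alpha_1}\cdots\lambda_k^{\alpha_k}\,t^{r\nu}E^{r+1}_{\nu,r\nu+1}(-\Lambda t^\nu), \] where the inner sum is over nonnegative integers $\alpha_1,\dots,\alpha_k$.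
   Context: Caputo derivative: for $0<\nu<1$, $\frac{d^\nu f(t)}{dt^\nu}=\frac{1}{\Gamma(1-\nu)}\int_0^t \frac{f'(s)}{(t-s)^{\nu}}\,ds$; for $\nu=1$ it is $f'(t)$. The system: $\frac{d^\nu p_0^\nu}{dt^\nu}=-\Lambda p_0^\nu$; $\frac{d^\nu p_j^\nu}{dt^\nu}=\sum_{r=1}^{j}\lambda_r p_{j-r}^\nu-\Lambda p_j^\nu$ for $j=1,\dots,k-1$; $\frac{d^\nu p_j^\nu}{dt^\nu}=\sum_{r=1}^{k}\lambda_r p_{j-r}^\nu-\Lambda p_j^\nu$ for $j\ge k$. Generalized Mittag-Leffler function: $E^{\gamma}_{\alpha,\beta}(z)=\sum_{r\ge0}\frac{(\gamma)_r z^r}{r!\,\Gamma(\alpha r+\beta)}$ with Pochhammer symbol $(\gamma)_r=\gamma(\gamma+1)\cdots(\gamma+r-1)$, $(\gamma)_0=1$. *)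

theory Defs
  imports "HOL-Analysis.Analysis"
begin

definition mittag_leffler3 :: "real \<Rightarrow> real \<Rightarrow> real \<Rightarrow> real \<Rightarrow> real" where
  "mittag_leffler3 \<gamma> \<alpha> \<beta> z =
     (\<Sum>r. pochhammer \<gamma> r * z ^ r / (fact r * Gamma (\<alpha> * real r + \<beta>)))"

definition caputo :: "real \<Rightarrow> (real \<Rightarrow> real) \<Rightarrow> real \<Rightarrow> real" where
  "caputo \<nu> f t =
     (if \<nu> = 1 then deriv f t
      else (1 / Gamma (1 - \<nu>)) * integral {0..t} (\<lambda>s. deriv f s / (t - s) powr \<nu>))"

definition caputo_exists :: "real \<Rightarrow> (real \<Rightarrow> real) \<Rightarrow> real \<Rightarrow> bool" where
  "caputo_exists \<nu> f t =
     (if \<nu> = 1 then f differentiable (at t)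
      else (\<forall>s\<in>{0<..<t}. f differentiable (at s)) \<and>
           (\<lambda>s. deriv f s / (t - s) powr \<nu>) integrable_on {0..t})"

definition multi_idx :: "nat \<Rightarrow> nat \<Rightarrow> nat \<Rightarrow> (nat \<Rightarrow> nat) set" where
  "multi_idx k r j = {\<alpha>. (\<forall>i. i \<notin> {1..k} \<longrightarrow> \<alpha> i = 0) \<and>
      (\<Sum>i=1..k. \<alpha> i) = r \<and> (\<Sum>i=1..k. i * \<alpha> i) = j}"

definition multinomial :: "nat \<Rightarrow> nat \<Rightarrow> (nat \<Rightarrow> nat) \<Rightarrow> real" where
  "multinomial k r \<alpha> = fact r / (\<Prod>i=1..k. fact (\<alpha> i))"

end

theory Submission
  imports Defs
begin

text \<open>Expanding each Mittag-Leffler function into its defining series gives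
    p_j(t) = \<Sum>_m A_j(m) t^(m\<nu>) / \<Gamma>(m\<nu> + 1),   A_j(m) = \<Sum>_r w_j(r) (m choose r) (-\<Lambda>)^(m - r),
  where w_j(r) is the inner multinomial sum. By the Beta integral, the Caputo derivative of
  t^(m\<nu>) / \<Gamma>(m\<nu> + 1) is t^((m - 1)\<nu>) / \<Gamma>((m - 1)\<nu> + 1), so the Caputo derivative of such a
  series merely shifts its coefficients; differentiating termwise is justified by dominated
  convergence, using |A_j(m)| \<le> (2\<Lambda>)^m and the growth of \<Gamma>. The system thereby reduces to
    A_j(m + 1) = \<Sum>_(1 \<le> i \<le> min j k) \<lambda>_i A_(j-i)(m) - \<Lambda> A_j(m),
  which follows from Pascal's rule for the binomial coefficients together with
  w_j(r + 1) = \<Sum>_i \<lambda>_i w_(j-i)(r), obtained by removing one part i from a multi-index.\<close>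

section \<open>Power series in \<open>t\<^sup>\<nu>\<close> normalised by \<open>\<Gamma>\<close>\<close>

lemma Gamma_plus1_pos: "x > 0 \<Longrightarrow> Gamma (x + 1) = x * Gamma x" for x :: real
  by (rule Gamma_plus1) auto

lemma Gamma_le_Gamma_add_powr:
  fixes \<nu> x :: real
  assumes nu: "0 < \<nu>" "\<nu> \<le> 1" and x: "x + \<nu> > 1"
  shows "Gamma x \<le> Gamma (x + \<nu>) * (x + \<nu> - 1) powr (-\<nu>)"
proof -
  have x_eq: "(1 - (1 - \<nu>)) *\<^sub>R (x + \<nu> - 1) + (1 - \<nu>) *\<^sub>R (x + \<nu>) = x"
    by (simp add: algebra_simps)
  have convex: "ln (Gamma x) \<le> \<nu> * ln (Gamma (x + \<nu> - 1)) + (1 - \<nu>) * ln (Gamma (x + \<nu>))"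
    using convex_onD[OF log_convex_Gamma_real, of "1 - \<nu>" "x + \<nu> - 1" "x + \<nu>"] x nu
    unfolding x_eq by simp
  have Gamma_shift: "Gamma (x + \<nu>) = (x + \<nu> - 1) * Gamma (x + \<nu> - 1)"
    using x by (metis Gamma_plus1_pos diff_add_cancel diff_gt_0_iff_gt)
  have "ln (Gamma (x + \<nu>)) = ln (x + \<nu> - 1) + ln (Gamma (x + \<nu> - 1))"
    unfolding Gamma_shift using x by (intro ln_mult_pos) auto
  with convex have "ln (Gamma x) \<le> ln (Gamma (x + \<nu>)) - \<nu> * ln (x + \<nu> - 1)"
    by (simp add: algebra_simps)
  moreover have "Gamma x > 0"
    using x nu by simp
  ultimately have "Gamma x \<le> exp (ln (Gamma (x + \<nu>)) - \<nu> * ln (x + \<nu> - 1))"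
    by (metis exp_le_cancel_iff exp_ln)
  also have "\<dots> = Gamma (x + \<nu>) * (x + \<nu> - 1) powr (-\<nu>)"
    using x nu by (simp add: exp_diff powr_def exp_minus field_simps)
  finally show ?thesis .
qed

lemma Gamma_mult_add_1_pos: "0 < \<nu> \<Longrightarrow> Gamma (real m * \<nu> + 1) > 0" for \<nu> :: real
  by (intro Gamma_real_pos) (simp add: add_nonneg_pos)

lemma Gamma_mult_Suc: "0 < \<nu> \<Longrightarrow> Gamma (real (Suc n) * \<nu> + 1) = real (Suc n) * \<nu> * Gamma (real (Suc n) * \<nu>)"
  for \<nu> :: real
  by (rule Gamma_plus1_pos) simp

lemma summable_power_div_Gamma:
  fixes \<nu> C :: real
  assumes nu: "0 < \<nu>" "\<nu> \<le> 1"
  shows "summable (\<lambda>m. \<bar>C\<bar> ^ m / Gamma (real m * \<nu> + 1))"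
proof -
  obtain N :: nat where N: "(2 * \<bar>C\<bar> + 1) powr (1 / \<nu>) / \<nu> < real N"
    using reals_Archimedean2 by blast
  show ?thesis
  proof (rule summable_ratio_test[of "1/2" N])
    fix n assume n: "N \<le> n"
    have n_nu: "0 \<le> real n * \<nu>"
      using nu by simp
    have "(2 * \<bar>C\<bar> + 1) powr (1 / \<nu>) < real N * \<nu>"
      using N nu by (simp add: field_simps)
    moreover have "real N * \<nu> \<le> real n * \<nu>"
      using n nu by (intro mult_right_mono) auto
    ultimately have "(2 * \<bar>C\<bar> + 1) powr (1 / \<nu>) \<le> real n * \<nu> + \<nu>"
      using nu by linarith
    then have "((2 * \<bar>C\<bar> + 1) powr (1 / \<nu>)) powr \<nu> \<le> (real n * \<nu> + \<nu>) powr \<nu>"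
      using nu by (intro powr_mono2) auto
    then have "2 * \<bar>C\<bar> + 1 \<le> (real n * \<nu> + \<nu>) powr \<nu>"
      using nu by (simp add: powr_powr)
    moreover have pos: "real n * \<nu> + \<nu> > 0"
      using nu n_nu by linarith
    then have "(real n * \<nu> + \<nu>) powr \<nu> > 0"
      by simp
    ultimately have C_small: "\<bar>C\<bar> * (real n * \<nu> + \<nu>) powr (-\<nu>) \<le> 1/2"
      by (simp add: powr_minus field_simps)
    have "Gamma (real n * \<nu> + 1) \<le> Gamma (real n * \<nu> + 1 + \<nu>) * (real n * \<nu> + 1 + \<nu> - 1) powr (-\<nu>)"
      using pos by (intro Gamma_le_Gamma_add_powr[OF nu]) simp
    then have "Gamma (real n * \<nu> + 1) \<le> Gamma (real (Suc n) * \<nu> + 1) * (real n * \<nu> + \<nu>) powr (-\<nu>)"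
      by (simp add: algebra_simps)
    then have "\<bar>C\<bar> * Gamma (real n * \<nu> + 1)
        \<le> Gamma (real (Suc n) * \<nu> + 1) * (\<bar>C\<bar> * (real n * \<nu> + \<nu>) powr (-\<nu>))"
      by (metis abs_ge_zero mult.left_commute mult_left_mono)
    also have "\<dots> \<le> Gamma (real (Suc n) * \<nu> + 1) * (1/2)"
      using C_small Gamma_mult_add_1_pos[OF nu(1), of "Suc n"] by (intro mult_left_mono) auto
    finally have "\<bar>C\<bar> ^ n * (\<bar>C\<bar> * Gamma (real n * \<nu> + 1))
        \<le> \<bar>C\<bar> ^ n * (Gamma (real (Suc n) * \<nu> + 1) * (1/2))"
      by (rule mult_left_mono) simp
    then show "norm (\<bar>C\<bar> ^ Suc n / Gamma (real (Suc n) * \<nu> + 1))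
        \<le> 1/2 * norm (\<bar>C\<bar> ^ n / Gamma (real n * \<nu> + 1))"
      using Gamma_mult_add_1_pos[OF nu(1), of n] Gamma_mult_add_1_pos[OF nu(1), of "Suc n"]
      by (simp add: field_simps)
  qed simp
qed

definition ml_series :: "real \<Rightarrow> (nat \<Rightarrow> real) \<Rightarrow> real \<Rightarrow> real" where
  "ml_series \<nu> c x = (\<Sum>m. c m * x ^ m / Gamma (real m * \<nu> + 1))"

lemma summable_ml_series:
  assumes nu: "0 < \<nu>" "\<nu> \<le> 1" and B: "B \<ge> 0" and c: "\<And>m. \<bar>c m\<bar> \<le> A * B ^ m"
  shows "summable (\<lambda>m. c m * x ^ m / Gamma (real m * \<nu> + 1))"
proof (rule summable_comparison_test'[OF summable_mult[OF summable_power_div_Gamma[OF nu, of "B * x"], of A]])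
  fix m :: nat
  have "\<bar>c m\<bar> * \<bar>x\<bar> ^ m \<le> A * B ^ m * \<bar>x\<bar> ^ m"
    by (rule mult_right_mono[OF c]) simp
  then show "norm (c m * x ^ m / Gamma (real m * \<nu> + 1)) \<le> A * (\<bar>B * x\<bar> ^ m / Gamma (real m * \<nu> + 1))"
    using Gamma_mult_add_1_pos[OF nu(1), of m] B
    by (simp add: abs_mult power_abs power_mult_distrib divide_right_mono)
qed

lemma ml_series_0 [simp]: "ml_series \<nu> c 0 = c 0"
  using powser_zero[of "\<lambda>m. c m / Gamma (real m * \<nu> + 1)"] by (simp add: ml_series_def)

lemma ml_series_has_field_derivative:
  assumes nu: "0 < \<nu>" "\<nu> \<le> 1" and B: "B \<ge> 0" and c: "\<And>m. \<bar>c m\<bar> \<le> B ^ m"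
  shows "summable (\<lambda>n. c (Suc n) * x ^ n / Gamma (real (Suc n) * \<nu>))"
    and "(ml_series \<nu> c has_field_derivative
           (\<Sum>n. c (Suc n) * x ^ n / Gamma (real (Suc n) * \<nu>)) / \<nu>) (at x)"
proof -
  define d where "d m = c m / Gamma (real m * \<nu> + 1)" for m
  have d_summable: "summable (\<lambda>m. d m * y ^ m)" for y
    using summable_ml_series[OF nu B, of c 1] c by (simp add: d_def)
  have diffs_eq: "diffs d n * x ^ n = c (Suc n) * x ^ n / Gamma (real (Suc n) * \<nu>) / \<nu>" for n
    unfolding diffs_def d_def Gamma_mult_Suc[OF nu(1)]
    using nu Gamma_real_pos[of "real (Suc n) * \<nu>"] by (simp add: field_simps del: of_nat_Suc)
  have "summable (\<lambda>n. diffs d n * x ^ n)"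
    by (rule termdiff_converges_all[OF d_summable])
  then show summ: "summable (\<lambda>n. c (Suc n) * x ^ n / Gamma (real (Suc n) * \<nu>))"
    using summable_mult[of "\<lambda>n. diffs d n * x ^ n" \<nu>] nu by (simp add: diffs_eq)
  have "((\<lambda>x. \<Sum>m. d m * x ^ m) has_field_derivative (\<Sum>n. diffs d n * x ^ n)) (at x)"
    by (rule termdiffs_strong_converges_everywhere[OF d_summable])
  moreover have "(\<lambda>x. \<Sum>m. d m * x ^ m) = ml_series \<nu> c"
    by (simp add: fun_eq_iff ml_series_def d_def)
  moreover have "(\<Sum>n. diffs d n * x ^ n) = (\<Sum>n. c (Suc n) * x ^ n / Gamma (real (Suc n) * \<nu>)) / \<nu>"
    unfolding diffs_eq by (rule suminf_divide[OF summ])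
  ultimately show "(ml_series \<nu> c has_field_derivative
      (\<Sum>n. c (Suc n) * x ^ n / Gamma (real (Suc n) * \<nu>)) / \<nu>) (at x)"
    by simp
qed

section \<open>Caputo derivative of such series\<close>

lemma has_integral_Beta_scaled:
  fixes t a b :: real
  assumes t: "t > 0" and a: "a > 0" and b: "b > 0"
  shows "((\<lambda>s. s powr (a - 1) * (t - s) powr (b - 1)) has_integral t powr (a + b - 1) * Beta a b) {0..t}"
proof -
  define F where "F u = u powr (a - 1) * (1 - u) powr (b - 1)" for u :: real
  have "(F has_integral Beta a b) (cbox 0 1)"
    unfolding F_def using has_integral_Beta_real[OF a b] by simp
  from has_integral_affinity'[OF this, of "1/t" 0] t
  have "((\<lambda>s. F (s / t)) has_integral Beta a b * t) {0..t}"
    by (simp add: mult.commute)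
  from has_integral_mult_right[OF this, of "t powr (a - 1) * t powr (b - 1)"]
  have "((\<lambda>s. t powr (a - 1) * t powr (b - 1) * F (s / t)) has_integral
      t powr (a - 1) * t powr (b - 1) * (Beta a b * t)) {0..t}" .
  then have "((\<lambda>s. s powr (a - 1) * (t - s) powr (b - 1)) has_integral
      t powr (a - 1) * t powr (b - 1) * (Beta a b * t)) {0..t}"
  proof (rule has_integral_eq[rotated])
    fix s :: real assume s: "s \<in> {0..t}"
    have "1 - s / t = (t - s) / t"
      using t by (simp add: field_simps)
    then show "t powr (a - 1) * t powr (b - 1) * F (s / t) = s powr (a - 1) * (t - s) powr (b - 1)"
      using t s by (simp add: F_def powr_divide)
  qed
  moreover have "t powr (a - 1) * t powr (b - 1) * (Beta a b * t) = t powr (a + b - 1) * Beta a b"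
    using t by (simp add: powr_add[symmetric] powr_diff)
  ultimately show ?thesis
    by simp
qed

lemma has_integral_suminf_dominated:
  fixes f :: "nat \<Rightarrow> real \<Rightarrow> real"
  assumes integral: "\<And>n. (f n has_integral I n) S"
    and bound: "\<And>n x. x \<in> S \<Longrightarrow> \<bar>f n x\<bar> \<le> b n * h x"
    and b: "summable b" "\<And>n. b n \<ge> 0"
    and h: "h integrable_on S" "\<And>x. x \<in> S \<Longrightarrow> h x \<ge> 0"
    and g: "\<And>x. x \<in> S \<Longrightarrow> (\<lambda>n. f n x) sums g x"
    and J: "I sums J"
  shows "(g has_integral J) S"
proof (rule has_integral_dominated_convergence
    [where f = "\<lambda>N x. \<Sum>n<N. f n x" and y = "\<lambda>N. \<Sum>n<N. I n" and h = "\<lambda>x. suminf b * h x"])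
  show "((\<lambda>x. \<Sum>n<N. f n x) has_integral (\<Sum>n<N. I n)) S" for N
    by (intro has_integral_sum integral) simp
  show "(\<lambda>x. suminf b * h x) integrable_on S"
    using h(1) by (rule integrable_on_mult_right)
  show "\<forall>x\<in>S. norm (\<Sum>n<N. f n x) \<le> suminf b * h x" for N
  proof
    fix x assume x: "x \<in> S"
    have "norm (\<Sum>n<N. f n x) \<le> (\<Sum>n<N. b n * h x)"
      unfolding real_norm_def by (rule order_trans[OF sum_abs sum_mono], rule bound[OF x])
    also have "\<dots> = (\<Sum>n<N. b n) * h x"
      by (simp add: sum_distrib_right)
    also have "\<dots> \<le> suminf b * h x"
      using b h(2)[OF x] by (intro mult_right_mono sum_le_suminf) auto
    finally show "norm (\<Sum>n<N. f n x) \<le> suminf b * h x" .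
  qed
  show "\<forall>x\<in>S. (\<lambda>N. \<Sum>n<N. f n x) \<longlonglongrightarrow> g x"
    using g by (simp add: sums_def)
  show "(\<lambda>N. \<Sum>n<N. I n) \<longlonglongrightarrow> J"
    using J by (simp add: sums_def)
qed

lemma has_integral_caputo_kernel_power:
  fixes \<nu> t :: real
  assumes nu: "0 < \<nu>" "\<nu> < 1" and t: "t > 0"
  shows "((\<lambda>s. (s powr \<nu>) ^ n / Gamma (real (Suc n) * \<nu>) * (s powr (\<nu> - 1) * (t - s) powr (-\<nu>)))
           has_integral Gamma (1 - \<nu>) * ((t powr \<nu>) ^ n / Gamma (real n * \<nu> + 1))) {0<..<t}"
proof -
  define a where "a = real (Suc n) * \<nu>"
  have a: "a > 0" "a + (1 - \<nu>) = real n * \<nu> + 1"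
    using nu by (simp_all add: a_def algebra_simps add_pos_nonneg)
  have "((\<lambda>s. s powr (a - 1) * (t - s) powr ((1 - \<nu>) - 1)) has_integral
          t powr (a + (1 - \<nu>) - 1) * Beta a (1 - \<nu>)) {0<..<t}"
    using nu unfolding has_integral_Icc_iff_Ioo[symmetric] by (intro has_integral_Beta_scaled[OF t a(1)]) simp
  from has_integral_mult_right[OF this, of "1 / Gamma a"]
  have "((\<lambda>s. (s powr \<nu>) ^ n / Gamma a * (s powr (\<nu> - 1) * (t - s) powr (-\<nu>))) has_integral
          1 / Gamma a * (t powr (a + (1 - \<nu>) - 1) * Beta a (1 - \<nu>))) {0<..<t}"
  proof (rule has_integral_eq[rotated])
    fix s :: real assume "s \<in> {0<..<t}"
    then show "1 / Gamma a * (s powr (a - 1) * (t - s) powr ((1 - \<nu>) - 1))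
        = (s powr \<nu>) ^ n / Gamma a * (s powr (\<nu> - 1) * (t - s) powr (-\<nu>))"
      by (simp add: a_def powr_power powr_add[symmetric] algebra_simps)
  qed
  moreover have "1 / Gamma a * (t powr (a + (1 - \<nu>) - 1) * Beta a (1 - \<nu>))
      = Gamma (1 - \<nu>) * ((t powr \<nu>) ^ n / Gamma (real n * \<nu> + 1))"
    unfolding Beta_def a(2) using t Gamma_real_pos[OF a(1)] by (simp add: powr_power mult.commute)
  ultimately show ?thesis
    unfolding a_def by simp
qed

lemma continuous_on_ml_series_powr:
  assumes nu: "0 < \<nu>" "\<nu> \<le> 1" and B: "B \<ge> 0" and c: "\<And>m. \<bar>c m\<bar> \<le> B ^ m"
  shows "continuous_on {0..} (\<lambda>t. ml_series \<nu> c (t powr \<nu>))"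
proof (rule continuous_on_compose2[of UNIV "ml_series \<nu> c"])
  show "continuous_on UNIV (ml_series \<nu> c)"
    using ml_series_has_field_derivative(2)[OF nu B c]
    by (meson DERIV_isCont continuous_at_imp_continuous_on)
  show "continuous_on {0..} (\<lambda>t::real. t powr \<nu>)"
    using nu by (intro continuous_on_powr' continuous_intros) auto
qed auto

lemma ml_series_powr_has_real_derivative:
  assumes nu: "0 < \<nu>" "\<nu> \<le> 1" and B: "B \<ge> 0" and c: "\<And>m. \<bar>c m\<bar> \<le> B ^ m"
    and s: "s > 0"
  shows "((\<lambda>t. ml_series \<nu> c (t powr \<nu>)) has_real_derivative
           (\<Sum>n. c (Suc n) * (s powr \<nu>) ^ n / Gamma (real (Suc n) * \<nu>)) * s powr (\<nu> - 1)) (at s)"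
  using DERIV_chain2[OF ml_series_has_field_derivative(2)[OF nu B c] has_real_derivative_powr[OF s, of \<nu>]] nu
  by simp

lemma caputo_integrand_sums:
  assumes nu: "0 < \<nu>" "\<nu> \<le> 1" and B: "B \<ge> 0" and c: "\<And>m. \<bar>c m\<bar> \<le> B ^ m"
    and s: "s > 0"
  shows "(\<lambda>n. c (Suc n) * (s powr \<nu>) ^ n / Gamma (real (Suc n) * \<nu>) * (s powr (\<nu> - 1) * (t - s) powr (-\<nu>)))
           sums (deriv (\<lambda>t. ml_series \<nu> c (t powr \<nu>)) s / (t - s) powr \<nu>)"
proof -
  have "(\<lambda>n. c (Suc n) * (s powr \<nu>) ^ n / Gamma (real (Suc n) * \<nu>) * (s powr (\<nu> - 1) * (t - s) powr (-\<nu>)))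
      sums ((\<Sum>n. c (Suc n) * (s powr \<nu>) ^ n / Gamma (real (Suc n) * \<nu>)) * (s powr (\<nu> - 1) * (t - s) powr (-\<nu>)))"
    using ml_series_has_field_derivative(1)[OF nu B c] by (intro sums_mult2 summable_sums)
  moreover have "deriv (\<lambda>t. ml_series \<nu> c (t powr \<nu>)) s
      = (\<Sum>n. c (Suc n) * (s powr \<nu>) ^ n / Gamma (real (Suc n) * \<nu>)) * s powr (\<nu> - 1)"
    by (intro DERIV_imp_deriv ml_series_powr_has_real_derivative[OF nu B c s])
  then have "deriv (\<lambda>t. ml_series \<nu> c (t powr \<nu>)) s / (t - s) powr \<nu>
      = (\<Sum>n. c (Suc n) * (s powr \<nu>) ^ n / Gamma (real (Suc n) * \<nu>)) * (s powr (\<nu> - 1) * (t - s) powr (-\<nu>))"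
    unfolding powr_minus divide_inverse by (simp only: mult.assoc)
  ultimately show ?thesis
    by simp
qed

lemma has_integral_caputo_ml_series_powr:
  fixes \<nu> t :: real
  assumes nu: "0 < \<nu>" "\<nu> < 1" and B: "B \<ge> 0" and c: "\<And>m. \<bar>c m\<bar> \<le> B ^ m"
    and t: "t > 0"
  shows "((\<lambda>s. deriv (\<lambda>t. ml_series \<nu> c (t powr \<nu>)) s / (t - s) powr \<nu>) has_integral
           Gamma (1 - \<nu>) * ml_series \<nu> (\<lambda>n. c (Suc n)) (t powr \<nu>)) {0..t}"
proof -
  have nu': "0 < \<nu>" "\<nu> \<le> 1"
    using nu by simp_all
  define G where "G n = Gamma (real (Suc n) * \<nu>)" for n
  define kernel where "kernel s = s powr (\<nu> - 1) * (t - s) powr (-\<nu>)" for s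
  define u where "u n s = c (Suc n) * ((s powr \<nu>) ^ n / G n * kernel s)" for n s
  have G_pos: "G n > 0" for n
    using nu by (simp add: G_def)
  have integral: "(u n has_integral
      c (Suc n) * (Gamma (1 - \<nu>) * ((t powr \<nu>) ^ n / Gamma (real n * \<nu> + 1)))) {0<..<t}" for n
    unfolding u_def G_def kernel_def
    by (rule has_integral_mult_right[OF has_integral_caputo_kernel_power[OF nu t]])
  have bound: "\<bar>u n s\<bar> \<le> \<bar>c (Suc n)\<bar> * ((t powr \<nu>) ^ n / G n) * kernel s" if s: "s \<in> {0<..<t}" for n s
  proof -
    have "(s powr \<nu>) ^ n \<le> (t powr \<nu>) ^ n" "kernel s > 0"
      using s nu by (auto simp: kernel_def intro!: power_mono powr_mono2)
    then show ?thesis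
      using G_pos[of n] unfolding u_def abs_mult
      by (auto simp: mult.assoc intro!: mult_left_mono divide_right_mono)
  qed
  have "summable (\<lambda>n. \<bar>c (Suc n)\<bar> * (t powr \<nu>) ^ n / G n)"
    using ml_series_has_field_derivative(1)[OF nu' B, of "\<lambda>m. \<bar>c m\<bar>"] c by (simp add: G_def)
  then have summable: "summable (\<lambda>n. \<bar>c (Suc n)\<bar> * ((t powr \<nu>) ^ n / G n))"
    by simp
  have "(kernel has_integral t powr (\<nu> + (1 - \<nu>) - 1) * Beta \<nu> (1 - \<nu>)) {0..t}"
    unfolding kernel_def using has_integral_Beta_scaled[OF t nu(1), of "1 - \<nu>"] nu by simp
  then have kernel_integrable: "kernel integrable_on {0<..<t}"
    unfolding has_integral_Icc_iff_Ioo by (rule has_integral_integrable)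
  have pointwise: "(\<lambda>n. u n s) sums (deriv (\<lambda>t. ml_series \<nu> c (t powr \<nu>)) s / (t - s) powr \<nu>)"
    if "s \<in> {0<..<t}" for s
  proof -
    have "(\<lambda>n. u n s) = (\<lambda>n. c (Suc n) * (s powr \<nu>) ^ n / Gamma (real (Suc n) * \<nu>) *
        (s powr (\<nu> - 1) * (t - s) powr (-\<nu>)))"
      by (simp add: u_def G_def kernel_def fun_eq_iff)
    then show ?thesis
      using that caputo_integrand_sums[OF nu' B c, of s t] by simp
  qed
  have "summable (\<lambda>n. c (Suc n) * (t powr \<nu>) ^ n / Gamma (real n * \<nu> + 1))"
    using c by (intro summable_ml_series[OF nu' B, of _ B]) (metis power_Suc)
  then have "(\<lambda>n. Gamma (1 - \<nu>) * (c (Suc n) * (t powr \<nu>) ^ n / Gamma (real n * \<nu> + 1)))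
      sums (Gamma (1 - \<nu>) * ml_series \<nu> (\<lambda>n. c (Suc n)) (t powr \<nu>))"
    unfolding ml_series_def by (intro sums_mult summable_sums)
  moreover have "(\<lambda>n. Gamma (1 - \<nu>) * (c (Suc n) * (t powr \<nu>) ^ n / Gamma (real n * \<nu> + 1)))
      = (\<lambda>n. c (Suc n) * (Gamma (1 - \<nu>) * ((t powr \<nu>) ^ n / Gamma (real n * \<nu> + 1))))"
    by (simp add: fun_eq_iff)
  ultimately have integrals: "(\<lambda>n. c (Suc n) * (Gamma (1 - \<nu>) * ((t powr \<nu>) ^ n / Gamma (real n * \<nu> + 1))))
      sums (Gamma (1 - \<nu>) * ml_series \<nu> (\<lambda>n. c (Suc n)) (t powr \<nu>))"
    by simp
  have "((\<lambda>s. deriv (\<lambda>t. ml_series \<nu> c (t powr \<nu>)) s / (t - s) powr \<nu>) has_integral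
           Gamma (1 - \<nu>) * ml_series \<nu> (\<lambda>n. c (Suc n)) (t powr \<nu>)) {0<..<t}"
  proof (rule has_integral_suminf_dominated[OF integral bound summable _ kernel_integrable _ pointwise integrals])
    show "\<bar>c (Suc n)\<bar> * ((t powr \<nu>) ^ n / G n) \<ge> 0" for n
      using G_pos[of n] by simp
    show "kernel s \<ge> 0" for s
      by (simp add: kernel_def)
  qed
  then show ?thesis
    unfolding has_integral_Icc_iff_Ioo .
qed

lemma caputo_ml_series_powr:
  assumes nu: "0 < \<nu>" "\<nu> \<le> 1" and B: "B \<ge> 0" and c: "\<And>m. \<bar>c m\<bar> \<le> B ^ m"
    and t: "t > 0"
  shows "caputo_exists \<nu> (\<lambda>t. ml_series \<nu> c (t powr \<nu>)) t"
    and "caputo \<nu> (\<lambda>t. ml_series \<nu> c (t powr \<nu>)) t = ml_series \<nu> (\<lambda>n. c (Suc n)) (t powr \<nu>)"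
proof -
  have differentiable: "(\<lambda>t. ml_series \<nu> c (t powr \<nu>)) differentiable (at s)" if "s > 0" for s
    using ml_series_powr_has_real_derivative[OF nu B c that] real_differentiable_def by blast
  have "caputo_exists \<nu> (\<lambda>t. ml_series \<nu> c (t powr \<nu>)) t \<and>
      caputo \<nu> (\<lambda>t. ml_series \<nu> c (t powr \<nu>)) t = ml_series \<nu> (\<lambda>n. c (Suc n)) (t powr \<nu>)"
  proof (cases "\<nu> = 1")
    case True
    then show ?thesis
      using DERIV_imp_deriv[OF ml_series_powr_has_real_derivative[OF nu B c t]] differentiable t
      by (simp add: caputo_def caputo_exists_def ml_series_def add.commute)
  next
    case False
    then have nu1: "\<nu> < 1" and Gamma_pos: "Gamma (1 - \<nu>) > 0"
      using nu by simp_all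
    show ?thesis
      using has_integral_caputo_ml_series_powr[OF nu(1) nu1 B c t] False differentiable Gamma_pos
      by (auto simp: caputo_def caputo_exists_def integral_unique has_integral_integrable)
  qed
  then show "caputo_exists \<nu> (\<lambda>t. ml_series \<nu> c (t powr \<nu>)) t"
    and "caputo \<nu> (\<lambda>t. ml_series \<nu> c (t powr \<nu>)) t = ml_series \<nu> (\<lambda>n. c (Suc n)) (t powr \<nu>)"
    by blast+
qed

section \<open>Multinomial weights\<close>

definition multi_weight :: "nat \<Rightarrow> (nat \<Rightarrow> real) \<Rightarrow> nat \<Rightarrow> nat \<Rightarrow> real" where
  "multi_weight k lam j r = (\<Sum>\<alpha>\<in>multi_idx k r j. multinomial k r \<alpha> * (\<Prod>i=1..k. lam i ^ \<alpha> i))"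

lemma finite_multi_idx: "finite (multi_idx k r j)"
proof (rule finite_subset)
  show "multi_idx k r j \<subseteq> {\<alpha>. \<forall>i. (i \<in> {1..k} \<longrightarrow> \<alpha> i \<in> {0..r}) \<and> (i \<notin> {1..k} \<longrightarrow> \<alpha> i = 0)}"
  proof safe
    fix \<alpha> i assume \<alpha>: "\<alpha> \<in> multi_idx k r j" and i: "i \<in> {1..k}"
    have "\<alpha> i \<le> (\<Sum>l=1..k. \<alpha> l)"
      using i by (intro member_le_sum) auto
    then show "\<alpha> i \<in> {0..r}"
      using \<alpha> by (simp add: multi_idx_def)
  qed (auto simp: multi_idx_def)
qed (rule finite_set_of_finite_funs; simp)

lemma multi_idx_nonzero_le:
  assumes "\<alpha> \<in> multi_idx k r j" "i \<in> {1..k}" "\<alpha> i \<noteq> 0"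
  shows "i \<le> j"
proof -
  have "i \<le> i * \<alpha> i"
    using assms(3) by simp
  also have "\<dots> \<le> (\<Sum>l=1..k. l * \<alpha> l)"
    using assms(2) by (intro member_le_sum) auto
  finally show ?thesis
    using assms(1) by (simp add: multi_idx_def)
qed

lemma multi_idx_eq_empty: "j < r \<Longrightarrow> multi_idx k r j = {}"
proof (rule ccontr)
  assume "j < r" "multi_idx k r j \<noteq> {}"
  then obtain \<alpha> where \<alpha>: "\<alpha> \<in> multi_idx k r j"
    by auto
  have "(\<Sum>i=1..k. \<alpha> i) \<le> (\<Sum>i=1..k. i * \<alpha> i)"
    by (intro sum_mono) auto
  with \<alpha> \<open>j < r\<close> show False
    by (simp add: multi_idx_def)
qed

lemma multi_weight_eq_0: "j < r \<Longrightarrow> multi_weight k lam j r = 0"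
  by (simp add: multi_weight_def multi_idx_eq_empty)

lemma multi_weight_0: "multi_weight k lam j 0 = (if j = 0 then 1 else 0)"
proof -
  have "\<alpha> = (\<lambda>_. 0)" if "\<alpha> \<in> multi_idx k 0 j" for \<alpha>
  proof
    fix i show "\<alpha> i = 0"
      using that by (cases "i \<in> {1..k}") (auto simp: multi_idx_def)
  qed
  then have "multi_idx k 0 j = (if j = 0 then {\<lambda>_. 0} else {})"
    by (auto simp: multi_idx_def)
  then show ?thesis
    by (simp add: multi_weight_def multinomial_def)
qed

lemma multinomial_lower:
  assumes i: "i \<in> {1..k}" and \<alpha>i: "\<alpha> i \<noteq> 0"
  shows "real (\<alpha> i) * multinomial k (Suc r) \<alpha> = real (Suc r) * multinomial k r (\<alpha>(i := \<alpha> i - 1))"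
proof -
  obtain a where a: "\<alpha> i = Suc a"
    using \<alpha>i by (cases "\<alpha> i") auto
  define P where "P = (\<Prod>l\<in>{1..k}-{i}. (fact (\<alpha> l) :: real))"
  have fact_prod: "(\<Prod>l=1..k. (fact (\<alpha> l) :: real)) = real (Suc a) * (fact a * P)"
    unfolding P_def using i a by (simp add: prod.remove[of _ i])
  have "(\<Prod>l\<in>{1..k}-{i}. (fact ((\<alpha>(i := \<alpha> i - 1)) l) :: real)) = P"
    unfolding P_def by (intro prod.cong) auto
  then have fact_prod_lower: "(\<Prod>l=1..k. (fact ((\<alpha>(i := \<alpha> i - 1)) l) :: real)) = fact a * P"
    using i a by (simp add: prod.remove[of _ i])
  have "real (\<alpha> i) * multinomial k (Suc r) \<alpha> = real (Suc a) * (fact (Suc r) / (real (Suc a) * (fact a * P)))"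
    unfolding multinomial_def fact_prod a ..
  also have "\<dots> = fact (Suc r) / (fact a * P)"
    by (simp del: of_nat_Suc)
  also have "\<dots> = real (Suc r) * multinomial k r (\<alpha>(i := \<alpha> i - 1))"
    unfolding multinomial_def fact_prod_lower fact_Suc by simp
  finally show ?thesis .
qed

lemma prod_power_lower:
  fixes lam :: "nat \<Rightarrow> 'a::comm_semiring_1"
  assumes i: "i \<in> {1..k}" and \<alpha>i: "\<alpha> i \<noteq> 0"
  shows "lam i * (\<Prod>l=1..k. lam l ^ (\<alpha>(i := \<alpha> i - 1)) l) = (\<Prod>l=1..k. lam l ^ \<alpha> l)"
proof -
  obtain a where a: "\<alpha> i = Suc a"
    using \<alpha>i by (cases "\<alpha> i") auto
  have "(\<Prod>l\<in>{1..k}-{i}. lam l ^ (\<alpha>(i := \<alpha> i - 1)) l) = (\<Prod>l\<in>{1..k}-{i}. lam l ^ \<alpha> l)"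
    by (intro prod.cong) auto
  then show ?thesis
    using i a by (simp add: prod.remove[of _ i] mult_ac)
qed

lemma multinomial_term_split:
  assumes \<alpha>: "\<alpha> \<in> multi_idx k (Suc r) j"
  shows "multinomial k (Suc r) \<alpha> * (\<Prod>l=1..k. lam l ^ \<alpha> l) =
    (\<Sum>i=1..k. if \<alpha> i = 0 then 0
      else lam i * (multinomial k r (\<alpha>(i := \<alpha> i - 1)) * (\<Prod>l=1..k. lam l ^ (\<alpha>(i := \<alpha> i - 1)) l)))"
proof -
  define T where "T = multinomial k (Suc r) \<alpha> * (\<Prod>l=1..k. lam l ^ \<alpha> l) / real (Suc r)"
  have term_eq: "(if \<alpha> i = 0 then 0
      else lam i * (multinomial k r (\<alpha>(i := \<alpha> i - 1)) * (\<Prod>l=1..k. lam l ^ (\<alpha>(i := \<alpha> i - 1)) l)))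
      = real (\<alpha> i) * T" if i: "i \<in> {1..k}" for i
  proof (cases "\<alpha> i = 0")
    case False
    have "real (Suc r) * multinomial k r (\<alpha>(i := \<alpha> i - 1)) = real (\<alpha> i) * multinomial k (Suc r) \<alpha>"
      using multinomial_lower[of i k \<alpha> r] i False by simp
    then have M: "multinomial k r (\<alpha>(i := \<alpha> i - 1)) = real (\<alpha> i) * multinomial k (Suc r) \<alpha> / real (Suc r)"
      by (simp add: field_simps del: of_nat_Suc)
    have "lam i * (multinomial k r (\<alpha>(i := \<alpha> i - 1)) * (\<Prod>l=1..k. lam l ^ (\<alpha>(i := \<alpha> i - 1)) l))
        = multinomial k r (\<alpha>(i := \<alpha> i - 1)) * (lam i * (\<Prod>l=1..k. lam l ^ (\<alpha>(i := \<alpha> i - 1)) l))"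
      by (rule mult.left_commute)
    also have "\<dots> = multinomial k r (\<alpha>(i := \<alpha> i - 1)) * (\<Prod>l=1..k. lam l ^ \<alpha> l)"
      by (simp only: prod_power_lower[where i = i and \<alpha> = \<alpha>, OF i False])
    also have "\<dots> = real (\<alpha> i) * T"
      unfolding M T_def by (simp only: times_divide_eq_left times_divide_eq_right mult.assoc)
    finally show ?thesis
      unfolding if_not_P[OF False] .
  qed simp
  have "multinomial k (Suc r) \<alpha> * (\<Prod>l=1..k. lam l ^ \<alpha> l) = real (\<Sum>i=1..k. \<alpha> i) * T"
    using \<alpha> by (simp add: multi_idx_def T_def del: of_nat_Suc)
  also have "\<dots> = (\<Sum>i=1..k. real (\<alpha> i) * T)"
    by (simp only: of_nat_sum sum_distrib_right)
  also have "\<dots> = (\<Sum>i=1..k. if \<alpha> i = 0 then 0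
      else lam i * (multinomial k r (\<alpha>(i := \<alpha> i - 1)) * (\<Prod>l=1..k. lam l ^ (\<alpha>(i := \<alpha> i - 1)) l)))"
    by (rule sum.cong[OF refl term_eq[symmetric]])
  finally show ?thesis .
qed

lemma bij_betw_multi_idx_lower:
  assumes i: "i \<in> {1..k}" and j: "i \<le> j"
  shows "bij_betw (\<lambda>\<alpha>. \<alpha>(i := \<alpha> i - 1)) {\<alpha> \<in> multi_idx k (Suc r) j. \<alpha> i \<noteq> 0} (multi_idx k r (j - i))"
proof (rule bij_betw_byWitness[where f' = "\<lambda>\<beta>. \<beta>(i := Suc (\<beta> i))"])
  have upd: "(\<Sum>l=1..k. g l ((f(i := v)) l)) = g i v + (\<Sum>l\<in>{1..k}-{i}. g l (f l))"
    for g :: "nat \<Rightarrow> nat \<Rightarrow> nat" and f v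
    by (subst sum.remove[OF finite_atLeastAtMost i]) (auto intro!: sum.cong)
  have orig: "(\<Sum>l=1..k. g l (f l)) = g i (f i) + (\<Sum>l\<in>{1..k}-{i}. g l (f l))"
    for g :: "nat \<Rightarrow> nat \<Rightarrow> nat" and f
    using i by (simp add: sum.remove)
  show "(\<lambda>\<alpha>. \<alpha>(i := \<alpha> i - 1)) ` {\<alpha> \<in> multi_idx k (Suc r) j. \<alpha> i \<noteq> 0} \<subseteq> multi_idx k r (j - i)"
  proof (rule image_subsetI)
    fix \<alpha> assume "\<alpha> \<in> {\<alpha> \<in> multi_idx k (Suc r) j. \<alpha> i \<noteq> 0}"
    then have \<alpha>: "\<alpha> \<in> multi_idx k (Suc r) j" and \<alpha>i: "\<alpha> i \<noteq> 0"
      by auto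
    have "(\<Sum>l=1..k. (\<alpha>(i := \<alpha> i - 1)) l) = r"
      using \<alpha> \<alpha>i upd[of "\<lambda>l x. x" \<alpha> "\<alpha> i - 1"] orig[of "\<lambda>l x. x" \<alpha>]
      by (simp add: multi_idx_def)
    moreover have "(\<Sum>l=1..k. l * (\<alpha>(i := \<alpha> i - 1)) l) = j - i"
      using \<alpha> \<alpha>i upd[of "\<lambda>l x. l * x" \<alpha> "\<alpha> i - 1"] orig[of "\<lambda>l x. l * x" \<alpha>]
      by (simp add: multi_idx_def diff_mult_distrib2)
    ultimately show "\<alpha>(i := \<alpha> i - 1) \<in> multi_idx k r (j - i)"
      using \<alpha> i by (auto simp: multi_idx_def)
  qed
  show "(\<lambda>\<beta>. \<beta>(i := Suc (\<beta> i))) ` multi_idx k r (j - i) \<subseteq> {\<alpha> \<in> multi_idx k (Suc r) j. \<alpha> i \<noteq> 0}"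
  proof (rule image_subsetI)
    fix \<beta> assume \<beta>: "\<beta> \<in> multi_idx k r (j - i)"
    have "(\<Sum>l=1..k. (\<beta>(i := Suc (\<beta> i))) l) = Suc r"
      using \<beta> upd[of "\<lambda>l x. x" \<beta> "Suc (\<beta> i)"] orig[of "\<lambda>l x. x" \<beta>]
      by (simp add: multi_idx_def)
    moreover have "(\<Sum>l=1..k. l * (\<beta>(i := Suc (\<beta> i))) l) = j"
      using \<beta> j upd[of "\<lambda>l x. l * x" \<beta> "Suc (\<beta> i)"] orig[of "\<lambda>l x. l * x" \<beta>]
      by (simp add: multi_idx_def)
    ultimately show "\<beta>(i := Suc (\<beta> i)) \<in> {\<alpha> \<in> multi_idx k (Suc r) j. \<alpha> i \<noteq> 0}"
      using \<beta> i by (auto simp: multi_idx_def)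
  qed
qed auto

lemma sum_if_le_eq_sum_min:
  fixes j k :: nat
  shows "(\<Sum>i=1..k. if i \<le> j then f i else 0) = (\<Sum>i=1..min j k. f i)"
proof -
  have "{i \<in> {1..k}. i \<le> j} = {1..min j k}"
    by auto
  then show ?thesis
    by (simp add: sum.inter_filter[symmetric])
qed

lemma multi_weight_Suc:
  "multi_weight k lam j (Suc r) = (\<Sum>i=1..min j k. lam i * multi_weight k lam (j - i) r)"
proof -
  define T where "T \<alpha> = multinomial k r \<alpha> * (\<Prod>l=1..k. lam l ^ \<alpha> l)" for \<alpha>
  have "multi_weight k lam j (Suc r)
      = (\<Sum>\<alpha>\<in>multi_idx k (Suc r) j. \<Sum>i=1..k. if \<alpha> i = 0 then 0 else lam i * T (\<alpha>(i := \<alpha> i - 1)))"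
    unfolding multi_weight_def T_def by (intro sum.cong refl multinomial_term_split)
  also have "\<dots> = (\<Sum>i=1..k. \<Sum>\<alpha>\<in>multi_idx k (Suc r) j. if \<alpha> i = 0 then 0 else lam i * T (\<alpha>(i := \<alpha> i - 1)))"
    by (rule sum.swap)
  also have "\<dots> = (\<Sum>i=1..k. \<Sum>\<alpha>\<in>{\<alpha> \<in> multi_idx k (Suc r) j. \<alpha> i \<noteq> 0}. lam i * T (\<alpha>(i := \<alpha> i - 1)))"
    unfolding sum.inter_filter[OF finite_multi_idx] by (intro sum.cong) auto
  also have "\<dots> = (\<Sum>i=1..k. if i \<le> j then lam i * multi_weight k lam (j - i) r else 0)"
  proof (intro sum.cong refl)
    fix i assume i: "i \<in> {1..k}"
    show "(\<Sum>\<alpha>\<in>{\<alpha> \<in> multi_idx k (Suc r) j. \<alpha> i \<noteq> 0}. lam i * T (\<alpha>(i := \<alpha> i - 1)))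
        = (if i \<le> j then lam i * multi_weight k lam (j - i) r else 0)"
    proof (cases "i \<le> j")
      case True
      then show ?thesis
        using sum.reindex_bij_betw[OF bij_betw_multi_idx_lower[OF i True], of "\<lambda>\<beta>. lam i * T \<beta>"]
        by (simp add: multi_weight_def T_def sum_distrib_left)
    next
      case False
      then have empty: "{\<alpha> \<in> multi_idx k (Suc r) j. \<alpha> i \<noteq> 0} = {}"
        using multi_idx_nonzero_le[OF _ i] by auto
      show ?thesis
        unfolding empty using False by simp
    qed
  qed
  finally show ?thesis
    by (simp only: sum_if_le_eq_sum_min)
qed

section \<open>Coefficients of the solution\<close>

text \<open>The truncated subtraction \<open>m - r\<close> is harmless: the binomial coefficient vanishes for \<open>m < r\<close>.\<close>
definition ml_coeff :: "real \<Rightarrow> nat \<Rightarrow> nat \<Rightarrow> real" where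
  "ml_coeff L r m = real (m choose r) * (-L) ^ (m - r)"

definition p_coeff :: "nat \<Rightarrow> (nat \<Rightarrow> real) \<Rightarrow> real \<Rightarrow> nat \<Rightarrow> nat \<Rightarrow> real" where
  "p_coeff k lam L j m = (\<Sum>r\<le>j. multi_weight k lam j r * ml_coeff L r m)"

lemma ml_coeff_Suc: "ml_coeff L r (Suc m) = (if r = 0 then 0 else ml_coeff L (r - 1) m) - L * ml_coeff L r m"
proof (cases r)
  case (Suc r')
  have "real (m choose Suc r') * (-L) ^ (m - r') = - L * (real (m choose Suc r') * (-L) ^ (m - Suc r'))"
  proof (cases "Suc r' \<le> m")
    case True
    then have "m - r' = Suc (m - Suc r')"
      by simp
    then show ?thesis
      by simp
  next
    case False
    then have "m choose Suc r' = 0"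
      by simp
    then show ?thesis
      by (simp del: binomial_eq_0_iff)
  qed
  then show ?thesis
    unfolding ml_coeff_def Suc by (simp add: algebra_simps)
qed (simp add: ml_coeff_def)

lemma p_coeff_extend: "j \<le> N \<Longrightarrow> p_coeff k lam L j m = (\<Sum>r\<le>N. multi_weight k lam j r * ml_coeff L r m)"
  unfolding p_coeff_def by (intro sum.mono_neutral_left) (auto simp: multi_weight_eq_0)

lemma p_coeff_0: "p_coeff k lam L j 0 = (if j = 0 then 1 else 0)"
proof -
  have "p_coeff k lam L j 0 = (\<Sum>r\<le>j. if r = 0 then multi_weight k lam j 0 else 0)"
    unfolding p_coeff_def ml_coeff_def by (intro sum.cong) auto
  then show ?thesis
    by (simp add: multi_weight_0)
qed

lemma p_coeff_Suc:
  "p_coeff k lam L j (Suc m) =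
    (\<Sum>i=1..min j k. lam i * p_coeff k lam L (j - i) m) - L * p_coeff k lam L j m"
proof -
  have "(\<Sum>r\<le>j. multi_weight k lam j r * (if r = 0 then 0 else ml_coeff L (r - 1) m))
      = (\<Sum>i=1..min j k. lam i * p_coeff k lam L (j - i) m)"
  proof (cases j)
    case (Suc j')
    have "(\<Sum>r\<le>j. multi_weight k lam j r * (if r = 0 then 0 else ml_coeff L (r - 1) m))
        = (\<Sum>r\<le>j'. multi_weight k lam j (Suc r) * ml_coeff L r m)"
      unfolding Suc by (subst sum.atMost_Suc_shift) simp
    also have "\<dots> = (\<Sum>r\<le>j'. \<Sum>i=1..min j k. lam i * (multi_weight k lam (j - i) r * ml_coeff L r m))"
      by (simp add: multi_weight_Suc sum_distrib_right mult.assoc)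
    also have "\<dots> = (\<Sum>i=1..min j k. lam i * (\<Sum>r\<le>j'. multi_weight k lam (j - i) r * ml_coeff L r m))"
      by (subst sum.swap) (simp add: sum_distrib_left)
    also have "\<dots> = (\<Sum>i=1..min j k. lam i * p_coeff k lam L (j - i) m)"
    proof (intro sum.cong refl)
      fix i assume "i \<in> {1..min j k}"
      then have "j - i \<le> j'"
        using Suc by auto
      then show "lam i * (\<Sum>r\<le>j'. multi_weight k lam (j - i) r * ml_coeff L r m)
          = lam i * p_coeff k lam L (j - i) m"
        by (simp add: p_coeff_extend)
    qed
    finally show ?thesis .
  qed simp
  then show ?thesis
    unfolding p_coeff_def ml_coeff_Suc by (simp add: algebra_simps sum_subtractf sum_distrib_left)
qed

lemma abs_p_coeff_le:
  assumes lam: "\<forall>i\<in>{1..k}. lam i \<ge> 0" and L: "L = (\<Sum>i=1..k. lam i)"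
  shows "\<bar>p_coeff k lam L j m\<bar> \<le> (2 * L) ^ m"
proof (induction m arbitrary: j)
  case 0
  then show ?case
    by (simp add: p_coeff_0)
next
  case (Suc m)
  have L_nonneg: "L \<ge> 0"
    unfolding L using lam by (intro sum_nonneg) auto
  have "\<bar>\<Sum>i=1..min j k. lam i * p_coeff k lam L (j - i) m\<bar>
      \<le> (\<Sum>i=1..min j k. \<bar>lam i * p_coeff k lam L (j - i) m\<bar>)"
    by (rule sum_abs)
  also have "\<dots> \<le> (\<Sum>i=1..min j k. lam i * (2 * L) ^ m)"
  proof (rule sum_mono)
    fix i assume "i \<in> {1..min j k}"
    then have "lam i \<ge> 0"
      using lam by auto
    then show "\<bar>lam i * p_coeff k lam L (j - i) m\<bar> \<le> lam i * (2 * L) ^ m"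
      unfolding abs_mult using Suc.IH[of "j - i"] by (simp add: mult_left_mono)
  qed
  also have "\<dots> \<le> (\<Sum>i=1..k. lam i * (2 * L) ^ m)"
    using lam L_nonneg by (intro sum_mono2) auto
  also have "\<dots> = L * (2 * L) ^ m"
    unfolding L by (simp add: sum_distrib_right)
  finally have sum_le: "\<bar>\<Sum>i=1..min j k. lam i * p_coeff k lam L (j - i) m\<bar> \<le> L * (2 * L) ^ m" .
  have "\<bar>L * p_coeff k lam L j m\<bar> \<le> L * (2 * L) ^ m"
    unfolding abs_mult using Suc.IH[of j] L_nonneg by (simp add: mult_left_mono)
  with sum_le have "\<bar>p_coeff k lam L j (Suc m)\<bar> \<le> L * (2 * L) ^ m + L * (2 * L) ^ m"
    unfolding p_coeff_Suc by (intro order_trans[OF abs_triangle_ineq4 add_mono])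
  also have "\<dots> = (2 * L) ^ Suc m"
    by simp
  finally show ?case .
qed

lemma pochhammer_div_fact_eq_binomial:
  "pochhammer (real r + 1) n / fact n = real ((n + r) choose r)"
proof -
  have "real ((n + r) choose r) = real ((n + r) choose n)"
    by (simp add: binomial_symmetric[of r "n + r"])
  also have "\<dots> = real (n + r) gchoose n"
    by (rule binomial_gbinomial)
  also have "\<dots> = pochhammer (real r + 1) n / fact n"
    by (simp add: gbinomial_pochhammer')
  finally show ?thesis ..
qed

lemma abs_ml_coeff_le: "\<bar>ml_coeff L r m\<bar> \<le> (2 * max 1 \<bar>L\<bar>) ^ m"
proof -
  have "real (m choose r) \<le> 2 ^ m"
    using binomial_le_pow2[of m r] by (metis of_nat_le_iff of_nat_numeral of_nat_power)
  moreover have "\<bar>L\<bar> ^ (m - r) \<le> max 1 \<bar>L\<bar> ^ m"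
    by (rule order_trans[OF power_mono power_increasing]) auto
  ultimately have "real (m choose r) * \<bar>L\<bar> ^ (m - r) \<le> 2 ^ m * max 1 \<bar>L\<bar> ^ m"
    by (intro mult_mono) auto
  then show ?thesis
    by (simp add: ml_coeff_def abs_mult power_abs power_mult_distrib)
qed

lemma ml_coeff_sums:
  assumes nu: "0 < \<nu>" "\<nu> \<le> 1"
  shows "(\<lambda>m. ml_coeff L r m * x ^ m / Gamma (real m * \<nu> + 1)) sums
           (x ^ r * mittag_leffler3 (real r + 1) \<nu> (real r * \<nu> + 1) (- L * x))"
proof -
  define T where "T m = ml_coeff L r m * x ^ m / Gamma (real m * \<nu> + 1)" for m
  define E where "E n = pochhammer (real r + 1) n * (- L * x) ^ n / (fact n * Gamma (\<nu> * real n + (real r * \<nu> + 1)))" for n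
  have "summable T"
    unfolding T_def using abs_ml_coeff_le
    by (intro summable_ml_series[OF nu, where A = 1 and B = "2 * max 1 \<bar>L\<bar>"]) auto
  moreover have "T m = 0" if "m < r" for m
    using that by (simp add: T_def ml_coeff_def)
  ultimately have shift: "(\<lambda>n. T (n + r)) sums suminf T"
    using sums_zero_iff_shift[of r T] summable_sums by blast
  have T_shift: "T (n + r) = x ^ r * E n" for n
  proof -
    have "real (n + r) * \<nu> + 1 = \<nu> * real n + (real r * \<nu> + 1)"
      by (simp add: algebra_simps)
    then show ?thesis
      unfolding T_def E_def ml_coeff_def pochhammer_div_fact_eq_binomial[symmetric] power_mult_distrib
      by (simp add: power_add field_simps)
  qed
  show ?thesis
  proof (cases "x ^ r = 0")
    case True
    then have x0: "x = 0" "r > 0"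
      by (auto simp: power_eq_0_iff)
    then have "T m = 0" for m
      by (cases "m < r") (auto simp: T_def ml_coeff_def)
    then have "(\<lambda>m. ml_coeff L r m * x ^ m / Gamma (real m * \<nu> + 1)) = (\<lambda>_. 0)"
      by (simp add: T_def fun_eq_iff)
    then show ?thesis
      using x0 by (simp add: zero_power)
  next
    case False
    have "(\<lambda>n. T (n + r) / x ^ r) = E"
      using False by (simp add: T_shift fun_eq_iff)
    then have "E sums (suminf T / x ^ r)"
      using sums_divide[OF shift, of "x ^ r"] by simp
    moreover have "mittag_leffler3 (real r + 1) \<nu> (real r * \<nu> + 1) (- L * x) = suminf E"
      unfolding mittag_leffler3_def E_def ..
    ultimately have ml_eq: "x ^ r * mittag_leffler3 (real r + 1) \<nu> (real r * \<nu> + 1) (- L * x) = suminf T"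
      using False by (simp add: sums_iff)
    show ?thesis
      unfolding ml_eq using summable_sums[OF \<open>summable T\<close>] unfolding T_def[abs_def] .
  qed
qed

lemma p_coeff_sums:
  assumes nu: "0 < \<nu>" "\<nu> \<le> 1"
  shows "(\<lambda>m. p_coeff k lam L j m * x ^ m / Gamma (real m * \<nu> + 1)) sums
     (\<Sum>r=0..j. \<Sum>\<alpha>\<in>multi_idx k r j. multinomial k r \<alpha> * (\<Prod>i=1..k. lam i ^ \<alpha> i) * x ^ r *
         mittag_leffler3 (real r + 1) \<nu> (real r * \<nu> + 1) (- L * x))"
proof -
  have "(\<lambda>m. \<Sum>r\<le>j. multi_weight k lam j r * (ml_coeff L r m * x ^ m / Gamma (real m * \<nu> + 1))) sums
      (\<Sum>r\<le>j. multi_weight k lam j r * (x ^ r * mittag_leffler3 (real r + 1) \<nu> (real r * \<nu> + 1) (- L * x)))"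
    by (intro sums_sum sums_mult ml_coeff_sums[OF nu])
  then show ?thesis
    by (simp add: p_coeff_def multi_weight_def atLeast0AtMost sum_distrib_right sum_divide_distrib mult.assoc)
qed

lemma ml_series_p_coeff_Suc:
  assumes nu: "0 < \<nu>" "\<nu> \<le> 1"
    and lam: "\<forall>i\<in>{1..k}. lam i \<ge> 0" and L: "L = (\<Sum>i=1..k. lam i)"
  shows "ml_series \<nu> (\<lambda>n. p_coeff k lam L j (Suc n)) x =
    (\<Sum>i=1..min j k. lam i * ml_series \<nu> (p_coeff k lam L (j - i)) x) - L * ml_series \<nu> (p_coeff k lam L j) x"
proof -
  have L_nonneg: "2 * L \<ge> 0"
    unfolding L using lam by (intro mult_nonneg_nonneg sum_nonneg) auto
  have series: "(\<lambda>m. p_coeff k lam L j' m * x ^ m / Gamma (real m * \<nu> + 1)) sums ml_series \<nu> (p_coeff k lam L j') x"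
    for j'
    unfolding ml_series_def
    using abs_p_coeff_le[OF lam L] by (intro summable_sums summable_ml_series[OF nu L_nonneg, of _ 1]) simp
  have term_eq: "(\<Sum>i=1..min j k. lam i * (p_coeff k lam L (j - i) m * x ^ m / Gamma (real m * \<nu> + 1)))
      - L * (p_coeff k lam L j m * x ^ m / Gamma (real m * \<nu> + 1))
      = p_coeff k lam L j (Suc m) * x ^ m / Gamma (real m * \<nu> + 1)" for m
    by (simp add: p_coeff_Suc left_diff_distrib diff_divide_distrib sum_distrib_right sum_divide_distrib mult.assoc)
  have "(\<lambda>m. (\<Sum>i=1..min j k. lam i * (p_coeff k lam L (j - i) m * x ^ m / Gamma (real m * \<nu> + 1)))
        - L * (p_coeff k lam L j m * x ^ m / Gamma (real m * \<nu> + 1)))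
      sums ((\<Sum>i=1..min j k. lam i * ml_series \<nu> (p_coeff k lam L (j - i)) x) - L * ml_series \<nu> (p_coeff k lam L j) x)"
    by (intro sums_diff sums_sum sums_mult series)
  then show ?thesis
    unfolding term_eq ml_series_def[of \<nu> "\<lambda>n. p_coeff k lam L j (Suc n)"] by (rule sums_unique[symmetric])
qed

theorem proposition2p3:
  fixes \<nu> :: real and k :: nat and lam :: "nat \<Rightarrow> real"
    and \<Lambda> :: real and p :: "nat \<Rightarrow> real \<Rightarrow> real"
  assumes nu: "0 < \<nu>" "\<nu> \<le> 1"
    and k: "k \<ge> 1"
    and lam: "\<forall>i\<in>{1..k}. lam i > 0"
    and Lam: "\<Lambda> = (\<Sum>i=1..k. lam i)"
    and p: "\<And>j t. p j t =
      (\<Sum>r=0..j. \<Sum>\<alpha>\<in>multi_idx k r j.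
         multinomial k r \<alpha> * (\<Prod>i=1..k. lam i ^ \<alpha> i) * (t powr \<nu>) ^ r *
         mittag_leffler3 (real r + 1) \<nu> (real r * \<nu> + 1) (- \<Lambda> * t powr \<nu>))"
  shows "p 0 0 = 1 \<and> (\<forall>j\<ge>1. p j 0 = 0)
    \<and> (\<forall>j. continuous_on {0..} (p j))
    \<and> (\<forall>j. \<forall>t>0. caputo_exists \<nu> (p j) t)
    \<and> (\<forall>t>0. caputo \<nu> (p 0) t = - \<Lambda> * p 0 t)
    \<and> (\<forall>j. 1 \<le> j \<and> j \<le> k - 1 \<longrightarrow> (\<forall>t>0.
          caputo \<nu> (p j) t = (\<Sum>r=1..j. lam r * p (j - r) t) - \<Lambda> * p j t))
    \<and> (\<forall>j\<ge>k. \<forall>t>0.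
          caputo \<nu> (p j) t = (\<Sum>r=1..k. lam r * p (j - r) t) - \<Lambda> * p j t)"
proof -
  have lam_nonneg: "\<forall>i\<in>{1..k}. lam i \<ge> 0"
    using lam by auto
  then have Lam_nonneg: "2 * \<Lambda> \<ge> 0"
    unfolding Lam by (intro mult_nonneg_nonneg sum_nonneg) auto
  note bound = abs_p_coeff_le[OF lam_nonneg Lam]
  have p_eq: "p j = (\<lambda>t. ml_series \<nu> (p_coeff k lam \<Lambda> j) (t powr \<nu>))" for j
    using sums_unique[OF p_coeff_sums[OF nu]] by (simp add: fun_eq_iff p ml_series_def)
  have caputo_p: "caputo \<nu> (p j) t = (\<Sum>i=1..min j k. lam i * p (j - i) t) - \<Lambda> * p j t"
    if "t > 0" for j t
    unfolding p_eq caputo_ml_series_powr(2)[OF nu Lam_nonneg bound that]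
    by (rule ml_series_p_coeff_Suc[OF nu lam_nonneg Lam])
  show ?thesis
    using caputo_p caputo_ml_series_powr(1)[OF nu Lam_nonneg bound]
      continuous_on_ml_series_powr[OF nu Lam_nonneg bound] k
    by (auto simp: p_eq p_coeff_0 min_def)
qed

end
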